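(* If the quadrilateral $Q$ in $K^2$ has no parallel sides and no parallel diagonals, then a pair of bisectors of $Q$ is $Q$-antipodal if and only if it is $Q$-orthogonal.
   Context: $K$ is a field of characteristic $\neq 2$. Every line $L$ in $K^2$ has an equation $tX-uY+v=0$ normalized so that $t=1$ if $u=0$ and $u=1$ if $u\neq 0$; coefficients denoted $t_L,u_L,v_L$. A quadrilateral $Q=ABA'B'$ consists of four distinct lines $A,B,A',B'$ (sides), not all through one point, with adjacent sides ($A,B$; $B,A'$; $A',B'$; $B',A$) not parallel; opposite sides may be parallel. Vertices: $A\cap B$, $B\cap A'$, $A'\cap B'$, $B'\cap A$ (two may coincide if three sides are concurrent). Diagonals: the lines through nonadjacent vertices. The centroid is the average of the four vertices. Let $\alpha=t_Au_Bu_{A'}u_{B'}-u_At_Bu_{A'}u_{B'}+u_Au_Bt_{A'}u_{B'}-u_Au_Bu_{A'}t_{B'}$, $\beta=t_Au_Bt_{A'}u_{B'}-u_At_Bu_{A'}t_{B'}$, $\gamma=t_At_Bt_{A'}u_{B'}-t_At_Bu_{A'}t_{B'}+t_Au_Bt_{A'}t_{B'}-u_At_Bt_{A'}t_{B'}$, and $\langle \mathbf v,\mathbf w\rangle_Q=\mathbf v^T\begin{pmatrix}\gamma&-\beta\\-\beta&\alpha\end{pmatrix}\mathbf w$. Lines $\ell_1,\ell_2$ are $Q$-orthogonal if $\langle (u_{\ell_1},t_{\ell_1}),(u_{\ell_2},t_{\ell_2})\rangle_Q=0$. A line $\ell$ crosses a pair $\{\ell_1,\ell_2\}$ if distinct from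 both and not parallel to both; $\mathrm{mid}_{\{\ell_1,\ell_2\}}(\ell)$ is the midpoint of the points where $\ell$ meets $\ell_1,\ell_2$ (the point at infinity of $\ell$ if one is at infinity). $\ell$ bisects $Q$ (is a bisector) if $\mathrm{mid}_{\mathsf P}(\ell)$ is the same for all pairs $\mathsf P$ among $\{A,A'\},\{B,B'\}$ that $\ell$ crosses; this common point is the midpoint of the bisector. A pair $\{\ell_1,\ell_2\}$ of bisectors (possibly $\ell_1=\ell_2$) is $Q$-antipodal if the midpoint of their midpoints is the centroid of $Q$. *)

theory Defs
  imports Main
begin

text \<open>A line is represented by its normalized coefficient triple (t,u,v), standing for the
equation t X - u Y + v = 0, normalized so that t = 1 if u = 0 and u = 1 if u is nonzero.
With this normalization every line has exactly one representing triple.\<close>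

type_synonym 'a line = "'a \<times> 'a \<times> 'a"

definition tL :: "'a line \<Rightarrow> 'a" where "tL L = fst L"
definition uL :: "'a line \<Rightarrow> 'a" where "uL L = fst (snd L)"
definition vL :: "'a line \<Rightarrow> 'a" where "vL L = snd (snd L)"

definition is_line :: "('a::field) line \<Rightarrow> bool" where
  "is_line L \<longleftrightarrow> (uL L = 0 \<and> tL L = 1) \<or> uL L = 1"

definition on_line :: "('a::field) \<times> 'a \<Rightarrow> 'a line \<Rightarrow> bool" where
  "on_line p L \<longleftrightarrow> tL L * fst p - uL L * snd p + vL L = 0"

definition parallel :: "('a::field) line \<Rightarrow> 'a line \<Rightarrow> bool" where
  "parallel L M \<longleftrightarrow> tL L = tL M \<and> uL L = uL M"

definition meet :: "('a::field) line \<Rightarrow> 'a line \<Rightarrow> 'a \<times> 'a" where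
  "meet L M = (THE p. on_line p L \<and> on_line p M)"

definition line_through :: "('a::field) \<times> 'a \<Rightarrow> 'a \<times> 'a \<Rightarrow> 'a line" where
  "line_through p q = (THE L. is_line L \<and> on_line p L \<and> on_line q L)"

definition midpt :: "('a::field) \<times> 'a \<Rightarrow> 'a \<times> 'a \<Rightarrow> 'a \<times> 'a" where
  "midpt p q = ((fst p + fst q) / 2, (snd p + snd q) / 2)"

definition is_quad :: "('a::field) line \<Rightarrow> 'a line \<Rightarrow> 'a line \<Rightarrow> 'a line \<Rightarrow> bool" where
  "is_quad A B A' B' \<longleftrightarrow>
     is_line A \<and> is_line B \<and> is_line A' \<and> is_line B' \<and>
     distinct [A, B, A', B'] \<and>
     \<not> (\<exists>p. on_line p A \<and> on_line p B \<and> on_line p A' \<and> on_line p B') \<and>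
     \<not> parallel A B \<and> \<not> parallel B A' \<and> \<not> parallel A' B' \<and> \<not> parallel B' A"

definition centroid :: "('a::field) line \<Rightarrow> 'a line \<Rightarrow> 'a line \<Rightarrow> 'a line \<Rightarrow> 'a \<times> 'a" where
  "centroid A B A' B' =
     (let P1 = meet A B; P2 = meet B A'; P3 = meet A' B'; P4 = meet B' A in
      ((fst P1 + fst P2 + fst P3 + fst P4) / 4, (snd P1 + snd P2 + snd P3 + snd P4) / 4))"

definition diag1 :: "('a::field) line \<Rightarrow> 'a line \<Rightarrow> 'a line \<Rightarrow> 'a line \<Rightarrow> 'a line" where
  "diag1 A B A' B' = line_through (meet A B) (meet A' B')"

definition diag2 :: "('a::field) line \<Rightarrow> 'a line \<Rightarrow> 'a line \<Rightarrow> 'a line \<Rightarrow> 'a line" where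
  "diag2 A B A' B' = line_through (meet B A') (meet B' A)"

definition qalpha :: "('a::field) line \<Rightarrow> 'a line \<Rightarrow> 'a line \<Rightarrow> 'a line \<Rightarrow> 'a" where
  "qalpha A B A' B' =
     tL A * uL B * uL A' * uL B' - uL A * tL B * uL A' * uL B'
     + uL A * uL B * tL A' * uL B' - uL A * uL B * uL A' * tL B'"

definition qbeta :: "('a::field) line \<Rightarrow> 'a line \<Rightarrow> 'a line \<Rightarrow> 'a line \<Rightarrow> 'a" where
  "qbeta A B A' B' = tL A * uL B * tL A' * uL B' - uL A * tL B * uL A' * tL B'"

definition qgamma :: "('a::field) line \<Rightarrow> 'a line \<Rightarrow> 'a line \<Rightarrow> 'a line \<Rightarrow> 'a" where
  "qgamma A B A' B' =
     tL A * tL B * tL A' * uL B' - tL A * tL B * uL A' * tL B'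
     + tL A * uL B * tL A' * tL B' - uL A * tL B * tL A' * tL B'"

definition qform :: "('a::field) line \<Rightarrow> 'a line \<Rightarrow> 'a line \<Rightarrow> 'a line \<Rightarrow> 'a \<times> 'a \<Rightarrow> 'a \<times> 'a \<Rightarrow> 'a" where
  "qform A B A' B' v w =
     qgamma A B A' B' * fst v * fst w - qbeta A B A' B' * fst v * snd w
     - qbeta A B A' B' * snd v * fst w + qalpha A B A' B' * snd v * snd w"

definition Q_orthogonal :: "('a::field) line \<Rightarrow> 'a line \<Rightarrow> 'a line \<Rightarrow> 'a line \<Rightarrow> 'a line \<Rightarrow> 'a line \<Rightarrow> bool" where
  "Q_orthogonal A B A' B' l1 l2 \<longleftrightarrow> qform A B A' B' (uL l1, tL l1) (uL l2, tL l2) = 0"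

text \<open>Points of the projective closure: affine points, and points at infinity
(indexed by the normalized direction (u,t) of the lines through them).\<close>
datatype 'a ppoint = Fin "'a \<times> 'a" | Infty "'a \<times> 'a"

definition crosses :: "('a::field) line \<Rightarrow> 'a line \<Rightarrow> 'a line \<Rightarrow> bool" where
  "crosses l l1 l2 \<longleftrightarrow> l \<noteq> l1 \<and> l \<noteq> l2 \<and> \<not> (parallel l l1 \<and> parallel l l2)"

definition midl :: "('a::field) line \<Rightarrow> 'a line \<Rightarrow> 'a line \<Rightarrow> 'a ppoint" where
  "midl l l1 l2 =
     (if parallel l l1 \<or> parallel l l2 then Infty (uL l, tL l)
      else Fin (midpt (meet l l1) (meet l l2)))"

definition bisects :: "('a::field) line \<Rightarrow> 'a line \<Rightarrow> 'a line \<Rightarrow> 'a line \<Rightarrow> 'a line \<Rightarrow> bool" where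
  "bisects A B A' B' l \<longleftrightarrow> is_line l \<and>
     (crosses l A A' \<and> crosses l B B' \<longrightarrow> midl l A A' = midl l B B')"

definition bisector_mid :: "('a::field) line \<Rightarrow> 'a line \<Rightarrow> 'a line \<Rightarrow> 'a line \<Rightarrow> 'a line \<Rightarrow> 'a ppoint" where
  "bisector_mid A B A' B' l = (if crosses l A A' then midl l A A' else midl l B B')"

text \<open>Q-antipodal pair of bisectors: the midpoint of their midpoints is the centroid
(which is an affine point, so both midpoints must be affine).\<close>
definition Q_antipodal :: "('a::field) line \<Rightarrow> 'a line \<Rightarrow> 'a line \<Rightarrow> 'a line \<Rightarrow> 'a line \<Rightarrow> 'a line \<Rightarrow> bool" where
  "Q_antipodal A B A' B' l1 l2 \<longleftrightarrow>
     bisects A B A' B' l1 \<and> bisects A B A' B' l2 \<and>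
     (crosses l1 A A' \<or> crosses l1 B B') \<and> (crosses l2 A A' \<or> crosses l2 B B') \<and>
     (\<exists>p1 p2. bisector_mid A B A' B' l1 = Fin p1 \<and> bisector_mid A B A' B' l2 = Fin p2 \<and>
        midpt p1 p2 = centroid A B A' B')"

end

theory Submission
  imports Defs
begin

(*
  A line t X - u Y + v = 0 has direction d = (u, t). Clearing denominators in the midpoint
  condition shows that a line crossing all four sides is a bisector iff v q(d) + c(d) = 0,
  where q(d) = <d, d>_Q is a binary quadratic form and c a cubic form. A bisector always has
  q(d) \<noteq> 0 (for the sides by direct computation; otherwise all parallel lines would be
  bisectors, among them both diagonals), and its midpoint is (r(d), s(d)) / (2 q(d)) for two
  further quadratic forms r, s. The centroid is (<r, q>, <s, q>) / (2 <q, q>), where <_, _> is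
  the apolar pairing of binary quadratic forms, so antipodality of bisectors of directions
  d1, d2 says r(d1)/q(d1) + r(d2)/q(d2) = 2 <r, q> / <q, q>, and likewise for s.
  An identity between binary forms (bqf_sum_identity) rewrites this as
  P_q(d1, d2) (<q, q> P_r(d1, d2) - <r, q> P_q(d1, d2)) = 0 with P the polar forms. So
  Q-orthogonality, P_q(d1, d2) = 0, suffices; conversely, if it fails, the vanishing of the
  second factors for r and s forces det(r, s, q) = 0, whereas this determinant is the product
  of the cross products of the two diagonals and of the two pairs of opposite sides.
*)

section \<open>Binary quadratic forms\<close>

lemma common_kernel_cross_eq_0:
  fixes a1 a2 b1 b2 x y :: "'a::field"
  assumes "a1*x + a2*y = 0" "b1*x + b2*y = 0" "(x, y) \<noteq> (0, 0)"
  shows "a1*b2 = a2*b1"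
proof -
  have "(a1*b2 - a2*b1) * x = 0" "(a1*b2 - a2*b1) * y = 0"
    using assms(1,2) by algebra+
  then show ?thesis using assms(3) by auto
qed

fun bqf :: "'a::comm_ring_1 \<times> 'a \<times> 'a \<Rightarrow> 'a \<times> 'a \<Rightarrow> 'a" where
  "bqf (a, b, c) (u, t) = a*u*u + b*u*t + c*t*t"

fun bqf_polar :: "'a::comm_ring_1 \<times> 'a \<times> 'a \<Rightarrow> 'a \<times> 'a \<Rightarrow> 'a \<times> 'a \<Rightarrow> 'a" where
  "bqf_polar (a, b, c) (u1, t1) (u2, t2) = 2*a*u1*u2 + b*(u1*t2 + t1*u2) + 2*c*t1*t2"

fun apolar :: "'a::comm_ring_1 \<times> 'a \<times> 'a \<Rightarrow> 'a \<times> 'a \<times> 'a \<Rightarrow> 'a" where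
  "apolar (a, b, c) (a', b', c') = 2*a*c' - b*b' + 2*c*a'"

fun det3 :: "'a::comm_ring_1 \<times> 'a \<times> 'a \<Rightarrow> 'a \<times> 'a \<times> 'a \<Rightarrow> 'a \<times> 'a \<times> 'a \<Rightarrow> 'a" where
  "det3 (a, b, c) (a', b', c') (a'', b'', c'') =
     a*(b'*c'' - c'*b'') - b*(a'*c'' - c'*a'') + c*(a'*b'' - b'*a'')"

lemma bqf_sum_identity:
  "2 * (apolar q q * (bqf r d1 * bqf q d2 + bqf r d2 * bqf q d1) - 2 * apolar r q * bqf q d1 * bqf q d2)
   = bqf_polar q d1 d2 * (apolar q q * bqf_polar r d1 d2 - apolar r q * bqf_polar q d1 d2)"
proof -
  obtain a b c r0 r1 r2 u1 t1 u2 t2 where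
    "q = (a, b, c)" "r = (r0, r1, r2)" "d1 = (u1, t1)" "d2 = (u2, t2)"
    by (metis prod.exhaust)
  then show ?thesis by (simp add: algebra_simps)
qed

lemma bqf_ratio_sum_iff:
  fixes q r :: "'a::field \<times> 'a \<times> 'a"
  assumes "(2::'a) \<noteq> 0" "bqf q d1 \<noteq> 0" "bqf q d2 \<noteq> 0" "apolar q q \<noteq> 0"
  shows "bqf r d1 / bqf q d1 + bqf r d2 / bqf q d2 = 2 * apolar r q / apolar q q \<longleftrightarrow>
    bqf_polar q d1 d2 * (apolar q q * bqf_polar r d1 d2 - apolar r q * bqf_polar q d1 d2) = 0"
proof -
  have "bqf r d1 / bqf q d1 + bqf r d2 / bqf q d2 = 2 * apolar r q / apolar q q \<longleftrightarrow>
    apolar q q * (bqf r d1 * bqf q d2 + bqf r d2 * bqf q d1) - 2 * apolar r q * bqf q d1 * bqf q d2 = 0"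
    using assms(2-4) by (simp add: field_simps)
  also have "\<dots> \<longleftrightarrow> 2 * (apolar q q * (bqf r d1 * bqf q d2 + bqf r d2 * bqf q d1) - 2 * apolar r q * bqf q d1 * bqf q d2) = 0"
    using assms(1) by (simp only: mult_eq_0_iff simp_thms)
  finally show ?thesis unfolding bqf_sum_identity .
qed

lemma four_neq_0: "(2::'a::field) \<noteq> 0 \<Longrightarrow> (4::'a) \<noteq> 0"
  using mult_eq_0_iff[of "2::'a" 2] by simp

lemma polar_kernel_det3_eq_0:
  fixes g h q :: "'a::field \<times> 'a \<times> 'a"
  assumes "(2::'a) \<noteq> 0" and "apolar g q = 0" "apolar h q = 0"
    and "bqf_polar g d1 d2 = 0" "bqf_polar h d1 d2 = 0" "d2 \<noteq> (0, 0)" "bqf q d1 \<noteq> 0"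
  shows "det3 g h q = 0"
proof -
  obtain g0 g1 g2 h0 h1 h2 a b c u1 t1 u2 t2 where
    defs: "g = (g0, g1, g2)" "h = (h0, h1, h2)" "q = (a, b, c)" "d1 = (u1, t1)" "d2 = (u2, t2)"
    by (metis prod.exhaust)
  have "(2*g0*u1 + g1*t1) * u2 + (g1*u1 + 2*g2*t1) * t2 = 0"
       "(2*h0*u1 + h1*t1) * u2 + (h1*u1 + 2*h2*t1) * t2 = 0"
    using assms(4,5) unfolding defs by (simp; algebra)+
  then have "(2*g0*u1 + g1*t1) * (h1*u1 + 2*h2*t1) = (g1*u1 + 2*g2*t1) * (2*h0*u1 + h1*t1)"
    by (rule common_kernel_cross_eq_0) (use assms(6) in \<open>simp add: defs\<close>)
  moreover have "(4*a*c - b*b) * ((2*g0*u1 + g1*t1) * (h1*u1 + 2*h2*t1) - (g1*u1 + 2*g2*t1) * (2*h0*u1 + h1*t1))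
     = 4 * det3 g h q * bqf q d1"
    using assms(2,3) unfolding defs by (simp; algebra)
  ultimately have "4 * det3 g h q * bqf q d1 = 0" by simp
  then show ?thesis using four_neq_0[OF assms(1)] assms(7) by simp
qed

lemma bqf_ratio_sums_eq_iff_polar_eq_0:
  fixes q r s :: "'a::field \<times> 'a \<times> 'a"
  assumes two: "(2::'a) \<noteq> 0" and q12: "bqf q d1 \<noteq> 0" "bqf q d2 \<noteq> 0" and "d2 \<noteq> (0, 0)"
    and nondeg: "apolar q q \<noteq> 0" and indep: "det3 r s q \<noteq> 0"
  shows "(bqf r d1 / bqf q d1 + bqf r d2 / bqf q d2 = 2 * apolar r q / apolar q q \<and>
          bqf s d1 / bqf q d1 + bqf s d2 / bqf q d2 = 2 * apolar s q / apolar q q)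
         \<longleftrightarrow> bqf_polar q d1 d2 = 0"
proof -
  have "bqf_polar q d1 d2 = 0"
    if r: "apolar q q * bqf_polar r d1 d2 = apolar r q * bqf_polar q d1 d2"
      and s: "apolar q q * bqf_polar s d1 d2 = apolar s q * bqf_polar q d1 d2"
  proof -
    obtain a b c r0 r1 r2 s0 s1 s2 u1 t1 u2 t2 where
      defs: "q = (a, b, c)" "r = (r0, r1, r2)" "s = (s0, s1, s2)" "d1 = (u1, t1)" "d2 = (u2, t2)"
      by (metis prod.exhaust)
    define P R S where "P = apolar q q" and "R = apolar r q" and "S = apolar s q"
    \<comment> \<open>the parts of \<open>r\<close> and \<open>s\<close> apolar to \<open>q\<close>\<close>
    define g where "g = (P*r0 - R*a, P*r1 - R*b, P*r2 - R*c)"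
    define h where "h = (P*s0 - S*a, P*s1 - S*b, P*s2 - S*c)"
    have "apolar g q = 0" "apolar h q = 0"
      unfolding g_def h_def P_def R_def S_def defs by (simp; algebra)+
    moreover have "bqf_polar g d1 d2 = 0" "bqf_polar h d1 d2 = 0"
      using r s unfolding g_def h_def P_def R_def S_def defs
      by (simp; algebra)+
    ultimately have "det3 g h q = 0"
      using polar_kernel_det3_eq_0 two q12 \<open>d2 \<noteq> (0, 0)\<close> by blast
    moreover have "det3 g h q = P * P * det3 r s q"
      unfolding g_def h_def defs by simp algebra
    ultimately show ?thesis using nondeg indep by (simp add: P_def)
  qed
  then show ?thesis
    unfolding bqf_ratio_sum_iff[OF two q12 nondeg] by auto
qed

section \<open>Lines, intersection points and midpoints\<close>

lemma line_components [simp]: "tL (t, u, v) = t" "uL (t, u, v) = u" "vL (t, u, v) = v"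
  by (simp_all add: tL_def uL_def vL_def)

lemma line_eqI: "tL L = tL M \<Longrightarrow> uL L = uL M \<Longrightarrow> vL L = vL M \<Longrightarrow> L = M"
  by (simp add: prod_eq_iff tL_def uL_def vL_def)

definition ldir :: "'a line \<Rightarrow> 'a \<times> 'a" where
  "ldir L = (uL L, tL L)"

lemma ldir_neq_0: "is_line L \<Longrightarrow> ldir L \<noteq> (0, 0)"
  unfolding is_line_def ldir_def by auto

definition dir_cross :: "('a::field) line \<Rightarrow> 'a line \<Rightarrow> 'a" where
  "dir_cross L M = uL L * tL M - tL L * uL M"

lemma parallel_iff_dir_cross_eq_0:
  "is_line L \<Longrightarrow> is_line M \<Longrightarrow> parallel L M \<longleftrightarrow> dir_cross L M = 0"
  unfolding is_line_def parallel_def dir_cross_def by (auto simp: algebra_simps)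

lemma parallel_commute: "parallel L M \<longleftrightarrow> parallel M L"
  unfolding parallel_def by auto

lemma parallel_trans: "parallel l X \<Longrightarrow> parallel l Y \<Longrightarrow> parallel X Y"
  unfolding parallel_def by simp

definition meet_xnum :: "('a::field) line \<Rightarrow> 'a line \<Rightarrow> 'a" where
  "meet_xnum L M = vL L * uL M - uL L * vL M"

definition meet_ynum :: "('a::field) line \<Rightarrow> 'a line \<Rightarrow> 'a" where
  "meet_ynum L M = tL M * vL L - tL L * vL M"

lemma on_both_lines_iff:
  assumes "dir_cross L M \<noteq> 0"
  shows "on_line p L \<and> on_line p M \<longleftrightarrow>
    p = (meet_xnum L M / dir_cross L M, meet_ynum L M / dir_cross L M)"
proof
  assume "on_line p L \<and> on_line p M"
  then have "fst p * dir_cross L M = meet_xnum L M" "snd p * dir_cross L M = meet_ynum L M"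
    unfolding on_line_def dir_cross_def meet_xnum_def meet_ynum_def by algebra+
  then show "p = (meet_xnum L M / dir_cross L M, meet_ynum L M / dir_cross L M)"
    using assms by (simp add: prod_eq_iff field_simps)
next
  assume p: "p = (meet_xnum L M / dir_cross L M, meet_ynum L M / dir_cross L M)"
  have "tL L * meet_xnum L M - uL L * meet_ynum L M + vL L * dir_cross L M = 0"
       "tL M * meet_xnum L M - uL M * meet_ynum L M + vL M * dir_cross L M = 0"
    unfolding dir_cross_def meet_xnum_def meet_ynum_def by algebra+
  then show "on_line p L \<and> on_line p M"
    unfolding p on_line_def using assms by (simp add: field_simps)
qed

lemma meet_eq:
  assumes "dir_cross L M \<noteq> 0"
  shows "meet L M = (meet_xnum L M / dir_cross L M, meet_ynum L M / dir_cross L M)"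
  unfolding meet_def by (rule the_equality) (use on_both_lines_iff[OF assms] in blast)+

lemma on_line_meet: "dir_cross L M \<noteq> 0 \<Longrightarrow> on_line (meet L M) L \<and> on_line (meet L M) M"
  using on_both_lines_iff meet_eq by blast

lemma meet_unique: "dir_cross L M \<noteq> 0 \<Longrightarrow> on_line p L \<Longrightarrow> on_line p M \<Longrightarrow> meet L M = p"
  using on_both_lines_iff meet_eq by metis

lemma meet_commute: "meet L M = meet M L"
  unfolding meet_def by (simp add: conj_commute)

lemma on_line_dir:
  "on_line p L \<Longrightarrow> on_line q L \<Longrightarrow> tL L * (fst q - fst p) + (- uL L) * (snd q - snd p) = 0"
  unfolding on_line_def by algebra

lemma line_through_unique:
  assumes "p \<noteq> q"
  shows "\<exists>!L. is_line L \<and> on_line p L \<and> on_line q L"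
proof (rule ex_ex1I)
  show "\<exists>L. is_line L \<and> on_line p L \<and> on_line q L"
  proof (cases "fst p = fst q")
    case True
    then show ?thesis
      by (intro exI[of _ "(1, 0, - fst p)"]) (simp add: is_line_def on_line_def)
  next
    case False
    define t where "t = (snd q - snd p) / (fst q - fst p)"
    have "t * (fst q - fst p) = snd q - snd p" using False by (simp add: t_def)
    then show ?thesis
      by (intro exI[of _ "(t, 1, snd p - t * fst p)"]) (simp add: is_line_def on_line_def algebra_simps)
  qed
next
  fix L M
  assume L: "is_line L \<and> on_line p L \<and> on_line q L" and M: "is_line M \<and> on_line p M \<and> on_line q M"
  have "(fst q - fst p, snd q - snd p) \<noteq> (0, 0)" using assms by (auto simp: prod_eq_iff)
  then have "tL L * (- uL M) = (- uL L) * tL M"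
    using common_kernel_cross_eq_0 on_line_dir L M by blast
  then have "tL L = tL M \<and> uL L = uL M"
    using L M parallel_iff_dir_cross_eq_0[of L M] unfolding parallel_def dir_cross_def
    by (auto simp: algebra_simps)
  moreover from this have "vL L = vL M" using L M unfolding on_line_def by (metis add_left_cancel)
  ultimately show "L = M" by (simp add: line_eqI)
qed

lemma line_through:
  "p \<noteq> q \<Longrightarrow> is_line (line_through p q) \<and> on_line p (line_through p q) \<and> on_line q (line_through p q)"
  unfolding line_through_def by (rule theI') (rule line_through_unique)

lemma line_through_eqI:
  "p \<noteq> q \<Longrightarrow> is_line L \<Longrightarrow> on_line p L \<Longrightarrow> on_line q L \<Longrightarrow> line_through p q = L"
  using line_through line_through_unique by blast

lemma parallel_line_through:
  assumes "p \<noteq> q" "p' \<noteq> q'"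
    and "(fst q - fst p) * (snd q' - snd p') = (snd q - snd p) * (fst q' - fst p')"
  shows "parallel (line_through p q) (line_through p' q')"
proof -
  define L M where "L = line_through p q" and "M = line_through p' q'"
  have d: "(fst q - fst p, snd q - snd p) \<noteq> (0, 0)" "(fst q' - fst p', snd q' - snd p') \<noteq> (0, 0)"
    using assms(1,2) by (auto simp: prod_eq_iff)
  have L: "is_line L" "tL L * (fst q - fst p) + (- uL L) * (snd q - snd p) = 0"
    using line_through[OF assms(1)] on_line_dir unfolding L_def by blast+
  have M: "is_line M" "tL M * (fst q' - fst p') + (- uL M) * (snd q' - snd p') = 0"
    using line_through[OF assms(2)] on_line_dir unfolding M_def by blast+
  have "(snd q' - snd p') * (fst q - fst p) + (- (fst q' - fst p')) * (snd q - snd p) = 0"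
    using assms(3) by (simp add: algebra_simps)
  from common_kernel_cross_eq_0[OF L(2) this d(1)]
  have "tL L * (fst q' - fst p') + (- uL L) * (snd q' - snd p') = 0"
    by (simp add: algebra_simps)
  then have "tL L * (- uL M) = (- uL L) * tL M"
    using common_kernel_cross_eq_0[OF _ M(2) d(2)] by blast
  then show ?thesis
    unfolding L_def[symmetric] M_def[symmetric] parallel_iff_dir_cross_eq_0[OF L(1) M(1)] dir_cross_def
    by (simp add: algebra_simps)
qed

lemma midpt_eq_iff:
  assumes "(2::'a::field) \<noteq> 0"
  shows "midpt (a::'a \<times> 'a) b = midpt c d \<longleftrightarrow> fst a + fst b = fst c + fst d \<and> snd a + snd b = snd c + snd d"
  using assms divide_cancel_right unfolding midpt_def prod.inject by metis

lemma midpt_commute: "midpt p q = midpt q p"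
  unfolding midpt_def by (simp add: add.commute)

lemma add_divide_eq_add_divide_iff:
  fixes a b c d x1 x2 x3 x4 :: "'a::field"
  assumes "a \<noteq> 0" "b \<noteq> 0" "c \<noteq> 0" "d \<noteq> 0"
  shows "x1/a + x2/b = x3/c + x4/d \<longleftrightarrow> x1*b*c*d + x2*a*c*d - x3*a*b*d - x4*a*b*c = 0"
proof -
  have "(x1/a + x2/b - (x3/c + x4/d)) * (a*b*c*d) = x1*b*c*d + x2*a*c*d - x3*a*b*d - x4*a*b*c"
    using assms by (simp add: field_simps)
  then show ?thesis using assms by (metis eq_iff_diff_eq_0 mult_eq_0_iff)
qed

lemma half_sum_halves_eq_half_iff:
  fixes a b c x y z :: "'a::field"
  assumes "(2::'a) \<noteq> 0"
  shows "(a / (2 * x) + b / (2 * y)) / 2 = c / (2 * z) \<longleftrightarrow> a / x + b / y = 2 * c / z"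
  using assms
  by (smt (verit, best) divide_add_eq_iff divide_divide_eq_left' eq_divide_eq_numeral1(1) mult.commute
      times_divide_eq_right)

lemma midpt_meet_eq:
  fixes l X Y :: "('a::field) line"
  assumes "(2::'a) \<noteq> 0" "dir_cross l X \<noteq> 0" "dir_cross l Y \<noteq> 0" "d \<noteq> 0"
    and "(meet_xnum l X * dir_cross l Y + meet_xnum l Y * dir_cross l X) * d = x * dir_cross l X * dir_cross l Y"
    and "(meet_ynum l X * dir_cross l Y + meet_ynum l Y * dir_cross l X) * d = y * dir_cross l X * dir_cross l Y"
  shows "midpt (meet l X) (meet l Y) = (x / (2 * d), y / (2 * d))"
  using assms unfolding meet_eq[OF assms(2)] meet_eq[OF assms(3)] midpt_def
  by (simp add: field_simps) algebra

lemma on_line_opposite_vertex: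
  fixes m X X' Y Y' :: "('a::field) line"
  assumes "(2::'a) \<noteq> 0"
    and "dir_cross m X \<noteq> 0" "dir_cross m X' \<noteq> 0" "dir_cross m Y \<noteq> 0" "dir_cross m Y' \<noteq> 0"
    and "dir_cross X Y \<noteq> 0" "dir_cross X' Y' \<noteq> 0"
    and "midpt (meet m X) (meet m X') = midpt (meet m Y) (meet m Y')"
    and "on_line (meet X Y) m"
  shows "on_line (meet X' Y') m"
proof -
  have "meet m X = meet X Y" "meet m Y = meet X Y"
    using meet_unique on_line_meet assms(2,4,6,9) by blast+
  then have "meet m X' = meet m Y'"
    using assms(8) unfolding midpt_eq_iff[OF assms(1)] by (simp add: prod_eq_iff)
  then have "meet X' Y' = meet m X'"
    using meet_unique on_line_meet assms(3,5,7) by metis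
  then show ?thesis using on_line_meet assms(3) by metis
qed

section \<open>The forms attached to four lines\<close>

definition dir_form :: "('a::field) line \<Rightarrow> 'a line \<Rightarrow> 'a line \<Rightarrow> 'a line \<Rightarrow> 'a \<times> 'a \<times> 'a" where
  "dir_form A B A' B' = (qgamma A B A' B', - 2 * qbeta A B A' B', qalpha A B A' B')"

lemma bqf_polar_dir_form: "bqf_polar (dir_form A B A' B') v w = 2 * qform A B A' B' v w"
  by (cases v; cases w) (simp add: dir_form_def qform_def algebra_simps)

text \<open>The numerators of the coordinates of the bisector midpoint, obtained by solving the bisector
  equation for \<open>vL l\<close> and clearing denominators in the midpoint of the points on \<open>A\<close> and \<open>A'\<close>.\<close>

definition mid_xform :: "('a::field) line \<Rightarrow> 'a line \<Rightarrow> 'a line \<Rightarrow> 'a line \<Rightarrow> 'a \<times> 'a \<times> 'a" where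
  "mid_xform A B A' B' =
    (tL A*tL B*uL A'*vL B' - tL A*tL B*uL B'*vL A' - tL A*tL B'*uL B*vL A' + tL A*tL B'*uL A'*vL B
     + tL B*tL A'*uL A*vL B' - tL B*tL A'*uL B'*vL A + tL A'*tL B'*uL A*vL B - tL A'*tL B'*uL B*vL A,
     - tL A*uL B*uL A'*vL B' + 2*tL A*uL B*uL B'*vL A' - tL A*uL A'*uL B'*vL B - 2*tL B*uL A*uL A'*vL B'
     + tL B*uL A*uL B'*vL A' + tL B*uL A'*uL B'*vL A - tL A'*uL A*uL B*vL B' - tL A'*uL A*uL B'*vL B
     + 2*tL A'*uL B*uL B'*vL A + tL B'*uL A*uL B*vL A' - 2*tL B'*uL A*uL A'*vL B + tL B'*uL B*uL A'*vL A,
     2*uL A*uL B*uL A'*vL B' - 2*uL A*uL B*uL B'*vL A' + 2*uL A*uL A'*uL B'*vL B - 2*uL B*uL A'*uL B'*vL A)"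

definition mid_yform :: "('a::field) line \<Rightarrow> 'a line \<Rightarrow> 'a line \<Rightarrow> 'a line \<Rightarrow> 'a \<times> 'a \<times> 'a" where
  "mid_yform A B A' B' =
    (2*tL A*tL B*tL A'*vL B' - 2*tL A*tL B*tL B'*vL A' + 2*tL A*tL A'*tL B'*vL B - 2*tL B*tL A'*tL B'*vL A,
     - tL A*tL B*uL A'*vL B' + tL A*tL B*uL B'*vL A' - 2*tL A*tL A'*uL B*vL B' - 2*tL A*tL A'*uL B'*vL B
     + tL A*tL B'*uL B*vL A' - tL A*tL B'*uL A'*vL B - tL B*tL A'*uL A*vL B' + tL B*tL A'*uL B'*vL A
     + 2*tL B*tL B'*uL A*vL A' + 2*tL B*tL B'*uL A'*vL A - tL A'*tL B'*uL A*vL B + tL A'*tL B'*uL B*vL A,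
     tL A*uL B*uL A'*vL B' + tL A*uL A'*uL B'*vL B - tL B*uL A*uL B'*vL A' - tL B*uL A'*uL B'*vL A
     + tL A'*uL A*uL B*vL B' + tL A'*uL A*uL B'*vL B - tL B'*uL A*uL B*vL A' - tL B'*uL B*uL A'*vL A)"

definition bisector_offset :: "('a::field) line \<Rightarrow> 'a line \<Rightarrow> 'a line \<Rightarrow> 'a line \<Rightarrow> 'a line \<Rightarrow> 'a" where
  "bisector_offset A B A' B' l =
     vL A * dir_cross l B * dir_cross l A' * dir_cross l B' + vL A' * dir_cross l A * dir_cross l B * dir_cross l B'
     - vL B * dir_cross l A * dir_cross l A' * dir_cross l B' - vL B' * dir_cross l A * dir_cross l B * dir_cross l A'"

lemma bisector_offset_cong:
  "tL m = tL l \<Longrightarrow> uL m = uL l \<Longrightarrow> bisector_offset A B A' B' m = bisector_offset A B A' B' l"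
  unfolding bisector_offset_def dir_cross_def by simp

lemmas quad_forms_defs = dir_form_def mid_xform_def mid_yform_def bisector_offset_def ldir_def
  qalpha_def qbeta_def qgamma_def dir_cross_def meet_xnum_def meet_ynum_def

lemma apolar_dir_form:
  "apolar (dir_form A B A' B') (dir_form A B A' B')
   = - 4 * (dir_cross A B * dir_cross B A' * dir_cross A' B' * dir_cross B' A)"
  unfolding quad_forms_defs by simp algebra

lemma apolar_mid_xform:
  "apolar (mid_xform A B A' B') (dir_form A B A' B') = - 2 *
     (meet_xnum A B * dir_cross B A' * dir_cross A' B' * dir_cross B' A
      + meet_xnum B A' * dir_cross A B * dir_cross A' B' * dir_cross B' A
      + meet_xnum A' B' * dir_cross A B * dir_cross B A' * dir_cross B' A
      + meet_xnum B' A * dir_cross A B * dir_cross B A' * dir_cross A' B')"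
  unfolding quad_forms_defs by simp algebra

lemma apolar_mid_yform:
  "apolar (mid_yform A B A' B') (dir_form A B A' B') = - 2 *
     (meet_ynum A B * dir_cross B A' * dir_cross A' B' * dir_cross B' A
      + meet_ynum B A' * dir_cross A B * dir_cross A' B' * dir_cross B' A
      + meet_ynum A' B' * dir_cross A B * dir_cross B A' * dir_cross B' A
      + meet_ynum B' A * dir_cross A B * dir_cross B A' * dir_cross A' B')"
  unfolding quad_forms_defs by simp algebra

lemma det3_mid_forms:
  "det3 (mid_xform A B A' B') (mid_yform A B A' B') (dir_form A B A' B') =
    ((meet_xnum A' B' * dir_cross A B - meet_xnum A B * dir_cross A' B')
       * (meet_ynum B' A * dir_cross B A' - meet_ynum B A' * dir_cross B' A)
     - (meet_ynum A' B' * dir_cross A B - meet_ynum A B * dir_cross A' B')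
       * (meet_xnum B' A * dir_cross B A' - meet_xnum B A' * dir_cross B' A))
    * dir_cross A A' * dir_cross B B'"
  unfolding quad_forms_defs by simp algebra

lemma bisector_xsum:
  "meet_xnum l A * dir_cross l A' * dir_cross l B * dir_cross l B'
   + meet_xnum l A' * dir_cross l A * dir_cross l B * dir_cross l B'
   - meet_xnum l B * dir_cross l A * dir_cross l A' * dir_cross l B'
   - meet_xnum l B' * dir_cross l A * dir_cross l A' * dir_cross l B
   = - uL l * (vL l * bqf (dir_form A B A' B') (ldir l) + bisector_offset A B A' B' l)"
  unfolding quad_forms_defs by simp algebra

lemma bisector_ysum:
  "meet_ynum l A * dir_cross l A' * dir_cross l B * dir_cross l B'
   + meet_ynum l A' * dir_cross l A * dir_cross l B * dir_cross l B'
   - meet_ynum l B * dir_cross l A * dir_cross l A' * dir_cross l B'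
   - meet_ynum l B' * dir_cross l A * dir_cross l A' * dir_cross l B
   = - tL l * (vL l * bqf (dir_form A B A' B') (ldir l) + bisector_offset A B A' B' l)"
  unfolding quad_forms_defs by simp algebra

lemma bisector_midpt_numerators:
  assumes "vL l * bqf (dir_form A B A' B') (ldir l) + bisector_offset A B A' B' l = 0"
  shows "(meet_xnum l A * dir_cross l A' + meet_xnum l A' * dir_cross l A) * bqf (dir_form A B A' B') (ldir l)
           = bqf (mid_xform A B A' B') (ldir l) * dir_cross l A * dir_cross l A'"
    and "(meet_ynum l A * dir_cross l A' + meet_ynum l A' * dir_cross l A) * bqf (dir_form A B A' B') (ldir l)
           = bqf (mid_yform A B A' B') (ldir l) * dir_cross l A * dir_cross l A'"
    and "(meet_xnum l B * dir_cross l B' + meet_xnum l B' * dir_cross l B) * bqf (dir_form A B A' B') (ldir l)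
           = bqf (mid_xform A B A' B') (ldir l) * dir_cross l B * dir_cross l B'"
    and "(meet_ynum l B * dir_cross l B' + meet_ynum l B' * dir_cross l B) * bqf (dir_form A B A' B') (ldir l)
           = bqf (mid_yform A B A' B') (ldir l) * dir_cross l B * dir_cross l B'"
  using assms unfolding quad_forms_defs by (simp; algebra)+

lemma side_bisector_equation:
  assumes "X \<in> {A, B, A', B'}"
  shows "vL X * bqf (dir_form A B A' B') (ldir X) + bisector_offset A B A' B' X = 0"
proof -
  have "vL A * bqf (dir_form A B A' B') (ldir A) + bisector_offset A B A' B' A = 0"
    and "vL B * bqf (dir_form A B A' B') (ldir B) + bisector_offset A B A' B' B = 0"
    and "vL A' * bqf (dir_form A B A' B') (ldir A') + bisector_offset A B A' B' A' = 0"
    and "vL B' * bqf (dir_form A B A' B') (ldir B') + bisector_offset A B A' B' B' = 0"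
    unfolding quad_forms_defs by (simp; algebra)+
  then show ?thesis using assms by auto
qed

lemma bqf_dir_form_sides:
  "bqf (dir_form A B A' B') (ldir A) = - (dir_cross A B * dir_cross A A' * dir_cross A B')"
  "bqf (dir_form A B A' B') (ldir B) = dir_cross B A * dir_cross B A' * dir_cross B B'"
  "bqf (dir_form A B A' B') (ldir A') = - (dir_cross A' A * dir_cross A' B * dir_cross A' B')"
  "bqf (dir_form A B A' B') (ldir B') = dir_cross B' A * dir_cross B' B * dir_cross B' A'"
  unfolding quad_forms_defs by (simp; algebra)+

lemma bisector_is_line: "bisects A B A' B' l \<Longrightarrow> is_line l"
  unfolding bisects_def by simp

section \<open>Bisectors of a quadrilateral without parallel sides or diagonals\<close>

locale quad_no_parallels =
  fixes A B A' B' :: "('a::field) line"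
  assumes two_neq_0: "(2::'a) \<noteq> 0"
    and quad: "is_quad A B A' B'"
    and opposite_sides_not_parallel: "\<not> parallel A A'" "\<not> parallel B B'"
    and diags_not_parallel: "\<not> parallel (diag1 A B A' B') (diag2 A B A' B')"
begin

lemma sides_are_lines: "is_line A" "is_line B" "is_line A'" "is_line B'"
  using quad unfolding is_quad_def by simp_all

lemma sides_distinct: "distinct [A, B, A', B']"
  using quad unfolding is_quad_def by simp

lemma sides_not_parallel:
  "\<not> parallel A B" "\<not> parallel B A'" "\<not> parallel A' B'" "\<not> parallel B' A"
  "\<not> parallel A A'" "\<not> parallel B B'"
  "\<not> parallel B A" "\<not> parallel A' B" "\<not> parallel B' A'" "\<not> parallel A B'"
  "\<not> parallel A' A" "\<not> parallel B' B"
  using quad opposite_sides_not_parallel unfolding is_quad_def by (simp_all add: parallel_commute)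

lemma dir_cross_sides_neq_0:
  "dir_cross A B \<noteq> 0" "dir_cross B A' \<noteq> 0" "dir_cross A' B' \<noteq> 0" "dir_cross B' A \<noteq> 0"
  "dir_cross A A' \<noteq> 0" "dir_cross B B' \<noteq> 0"
  "dir_cross B A \<noteq> 0" "dir_cross A' B \<noteq> 0" "dir_cross B' A' \<noteq> 0" "dir_cross A B' \<noteq> 0"
  "dir_cross A' A \<noteq> 0" "dir_cross B' B \<noteq> 0"
  using sides_not_parallel sides_are_lines parallel_iff_dir_cross_eq_0 by metis+

lemma vertices_distinct: "meet A B \<noteq> meet A' B'" "meet B A' \<noteq> meet B' A"
  using quad on_line_meet dir_cross_sides_neq_0 unfolding is_quad_def by metis+

lemma diagonals_cross_neq_0:
  "(fst (meet A' B') - fst (meet A B)) * (snd (meet B' A) - snd (meet B A'))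
   \<noteq> (snd (meet A' B') - snd (meet A B)) * (fst (meet B' A) - fst (meet B A'))"
  using parallel_line_through[OF vertices_distinct] diags_not_parallel
  unfolding diag1_def diag2_def by blast

lemma det3_mid_forms_neq_0:
  "det3 (mid_xform A B A' B') (mid_yform A B A' B') (dir_form A B A' B') \<noteq> 0"
proof -
  have nz: "dir_cross A B \<noteq> 0" "dir_cross B A' \<noteq> 0" "dir_cross A' B' \<noteq> 0" "dir_cross B' A \<noteq> 0"
      "dir_cross A A' \<noteq> 0" "dir_cross B B' \<noteq> 0"
    by (fact dir_cross_sides_neq_0)+
  have diff: "fst (meet X' Y') - fst (meet X Y)
      = (meet_xnum X' Y' * dir_cross X Y - meet_xnum X Y * dir_cross X' Y') / (dir_cross X Y * dir_cross X' Y')"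
    "snd (meet X' Y') - snd (meet X Y)
      = (meet_ynum X' Y' * dir_cross X Y - meet_ynum X Y * dir_cross X' Y') / (dir_cross X Y * dir_cross X' Y')"
    if "dir_cross X Y \<noteq> 0" "dir_cross X' Y' \<noteq> 0" for X Y X' Y' :: "'a line"
    using that unfolding meet_eq[OF that(1)] meet_eq[OF that(2)] by (simp_all add: field_simps)
  show ?thesis
    using diagonals_cross_neq_0 nz
    unfolding det3_mid_forms diff[OF nz(1,3)] diff[OF nz(2,4)] times_divide_times_eq diff_divide_distrib[symmetric]
    by auto
qed

lemma apolar_dir_form_neq_0: "apolar (dir_form A B A' B') (dir_form A B A' B') \<noteq> 0"
  unfolding apolar_dir_form using dir_cross_sides_neq_0 four_neq_0[OF two_neq_0] by simp

lemma centroid_eq: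
  "centroid A B A' B' =
    (apolar (mid_xform A B A' B') (dir_form A B A' B') / (2 * apolar (dir_form A B A' B') (dir_form A B A' B')),
     apolar (mid_yform A B A' B') (dir_form A B A' B') / (2 * apolar (dir_form A B A' B') (dir_form A B A' B')))"
proof -
  have nz: "dir_cross A B \<noteq> 0" "dir_cross B A' \<noteq> 0" "dir_cross A' B' \<noteq> 0" "dir_cross B' A \<noteq> 0"
    by (fact dir_cross_sides_neq_0)+
  have sum4: "(x1 / c1 + x2 / c2 + x3 / c3 + x4 / c4) / 4
      = - 2 * (x1 * c2 * c3 * c4 + x2 * c1 * c3 * c4 + x3 * c1 * c2 * c4 + x4 * c1 * c2 * c3)
        / (2 * (- 4 * (c1 * c2 * c3 * c4)))"
    if "c1 \<noteq> 0" "c2 \<noteq> 0" "c3 \<noteq> 0" "c4 \<noteq> 0" for x1 x2 x3 x4 c1 c2 c3 c4 :: 'a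
  proof -
    have scale: "(- 2 * S) / (2 * (- 4 * P)) = S / (4 * P)" for S P :: 'a
      using two_neq_0 frac_eq_eq by fastforce
    have "x1 / c1 + x2 / c2 + x3 / c3 + x4 / c4
        = (x1 * c2 * c3 * c4 + x2 * c1 * c3 * c4 + x3 * c1 * c2 * c4 + x4 * c1 * c2 * c3) / (c1 * c2 * c3 * c4)"
      using that by (simp add: field_simps)
    then show ?thesis unfolding scale by (simp add: mult.commute)
  qed
  show ?thesis
    unfolding centroid_def Let_def meet_eq[OF nz(1)] meet_eq[OF nz(2)] meet_eq[OF nz(3)] meet_eq[OF nz(4)]
      apolar_mid_xform apolar_mid_yform apolar_dir_form
    using sum4[OF nz] by (simp add: add_divide_distrib)
qed

lemma midpts_eq_iff_bisector_equation:
  assumes "is_line l" and nz: "\<And>X. X \<in> {A, B, A', B'} \<Longrightarrow> dir_cross l X \<noteq> 0"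
  shows "midpt (meet l A) (meet l A') = midpt (meet l B) (meet l B') \<longleftrightarrow>
    vL l * bqf (dir_form A B A' B') (ldir l) + bisector_offset A B A' B' l = 0"
proof -
  have nz: "dir_cross l A \<noteq> 0" "dir_cross l A' \<noteq> 0" "dir_cross l B \<noteq> 0" "dir_cross l B' \<noteq> 0"
    using nz by simp_all
  define Z where "Z = vL l * bqf (dir_form A B A' B') (ldir l) + bisector_offset A B A' B' l"
  have "meet_xnum l A / dir_cross l A + meet_xnum l A' / dir_cross l A'
      = meet_xnum l B / dir_cross l B + meet_xnum l B' / dir_cross l B' \<longleftrightarrow> uL l * Z = 0"
    unfolding add_divide_eq_add_divide_iff[OF nz] bisector_xsum Z_def by simp
  moreover have "meet_ynum l A / dir_cross l A + meet_ynum l A' / dir_cross l A'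
      = meet_ynum l B / dir_cross l B + meet_ynum l B' / dir_cross l B' \<longleftrightarrow> tL l * Z = 0"
    unfolding add_divide_eq_add_divide_iff[OF nz] bisector_ysum Z_def by simp
  ultimately show ?thesis
    unfolding meet_eq[OF nz(1)] meet_eq[OF nz(2)] meet_eq[OF nz(3)] meet_eq[OF nz(4)]
      midpt_eq_iff[OF two_neq_0] fst_conv snd_conv Z_def[symmetric]
    using ldir_neq_0[OF assms(1)] by (auto simp: ldir_def)
qed

lemma bisector_dir_form_neq_0:
  assumes "is_line l" and nz: "\<And>X. X \<in> {A, B, A', B'} \<Longrightarrow> dir_cross l X \<noteq> 0"
    and bis: "vL l * bqf (dir_form A B A' B') (ldir l) + bisector_offset A B A' B' l = 0"
  shows "bqf (dir_form A B A' B') (ldir l) \<noteq> 0"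
proof
  assume q0: "bqf (dir_form A B A' B') (ldir l) = 0"
  \<comment> \<open>then every line of this direction is a bisector, in particular those through two adjacent vertices\<close>
  define m where "m p = (tL l, uL l, uL l * snd p - tL l * fst p)" for p :: "'a \<times> 'a"
  have m: "dir_cross (m p) X = dir_cross l X" "ldir (m p) = ldir l" "is_line (m p)" "on_line p (m p)"
    for p X
    using assms(1) unfolding m_def dir_cross_def ldir_def is_line_def on_line_def by simp_all
  have "bisector_offset A B A' B' (m p) = 0" for p
    using bis q0 bisector_offset_cong[of "m p" l] by (simp add: m_def)
  then have mid: "midpt (meet (m p) A) (meet (m p) A') = midpt (meet (m p) B) (meet (m p) B')" for p
    by (subst midpts_eq_iff_bisector_equation) (simp_all add: m nz q0)
  have "on_line (meet A' B') (m (meet A B))"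
    by (rule on_line_opposite_vertex[OF two_neq_0 _ _ _ _ _ _ mid])
      (simp_all add: m nz dir_cross_sides_neq_0)
  moreover have "on_line (meet A B') (m (meet A' B))"
    by (rule on_line_opposite_vertex[OF two_neq_0 _ _ _ _ _ _ mid[THEN midpt_commute[THEN trans]]])
      (simp_all add: m nz dir_cross_sides_neq_0)
  ultimately have "diag1 A B A' B' = m (meet A B)" "diag2 A B A' B' = m (meet B A')"
    unfolding diag1_def diag2_def
    using line_through_eqI vertices_distinct m(3,4) meet_commute by metis+
  moreover have "parallel (m (meet A B)) (m (meet B A'))"
    unfolding parallel_def m_def by simp
  ultimately show False using diags_not_parallel by simp
qed

lemma side_bisector:
  assumes "l \<in> {A, B, A', B'}"
  shows "vL l * bqf (dir_form A B A' B') (ldir l) + bisector_offset A B A' B' l = 0 \<and>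
    bqf (dir_form A B A' B') (ldir l) \<noteq> 0"
  using side_bisector_equation[OF assms] assms
  by (auto simp: bqf_dir_form_sides dir_cross_sides_neq_0)

lemma nonside_bisector:
  assumes bis: "bisects A B A' B' l" and "l \<notin> {A, B, A', B'}"
  shows "\<And>X. X \<in> {A, B, A', B'} \<Longrightarrow> dir_cross l X \<noteq> 0"
    and "crosses l A A'"
    and "midpt (meet l A) (meet l A') = midpt (meet l B) (meet l B')"
    and "bisector_mid A B A' B' l = Fin (midpt (meet l A) (meet l A'))"
proof -
  have cross: "crosses l A A'" "crosses l B B'"
    unfolding crosses_def using assms(2) sides_not_parallel parallel_trans by blast+
  then have eq: "midl l A A' = midl l B B'"
    using bis unfolding bisects_def by simp
  then have "parallel l A \<or> parallel l A' \<longleftrightarrow> parallel l B \<or> parallel l B'"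
    unfolding midl_def by (auto split: if_splits)
  then have np: "\<not> parallel l A" "\<not> parallel l A'" "\<not> parallel l B" "\<not> parallel l B'"
    using sides_not_parallel parallel_trans by blast+
  show "dir_cross l X \<noteq> 0" if "X \<in> {A, B, A', B'}" for X
    using that np sides_are_lines bisector_is_line[OF bis] parallel_iff_dir_cross_eq_0 by blast
  show "crosses l A A'" by (fact cross(1))
  show "midpt (meet l A) (meet l A') = midpt (meet l B) (meet l B')"
    using eq np unfolding midl_def by simp
  show "bisector_mid A B A' B' l = Fin (midpt (meet l A) (meet l A'))"
    unfolding bisector_mid_def midl_def using cross np by simp
qed

lemma bisector_equation:
  assumes "bisects A B A' B' l"
  shows "vL l * bqf (dir_form A B A' B') (ldir l) + bisector_offset A B A' B' l = 0 \<and>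
    bqf (dir_form A B A' B') (ldir l) \<noteq> 0"
proof (cases "l \<in> {A, B, A', B'}")
  case True
  then show ?thesis by (rule side_bisector)
next
  case False
  with nonside_bisector[OF assms] bisector_is_line[OF assms] show ?thesis
    using midpts_eq_iff_bisector_equation bisector_dir_form_neq_0 by blast
qed

lemma bisector_mid_as_midpt:
  assumes "bisects A B A' B' l"
  obtains X Y where "(X, Y) \<in> {(A, A'), (B, B')}" "crosses l X Y"
    "dir_cross l X \<noteq> 0" "dir_cross l Y \<noteq> 0"
    "bisector_mid A B A' B' l = Fin (midpt (meet l X) (meet l Y))"
proof (cases "l \<in> {A, B, A', B'}")
  case True
  then show ?thesis
    using that[of A A'] that[of B B'] sides_distinct sides_not_parallel dir_cross_sides_neq_0
    by (elim insertE emptyE) (auto simp: bisector_mid_def crosses_def midl_def)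
next
  case False
  then show ?thesis
    using that nonside_bisector[OF assms False] by blast
qed

definition bisector_point :: "'a line \<Rightarrow> 'a \<times> 'a" where
  "bisector_point l =
    (bqf (mid_xform A B A' B') (ldir l) / (2 * bqf (dir_form A B A' B') (ldir l)),
     bqf (mid_yform A B A' B') (ldir l) / (2 * bqf (dir_form A B A' B') (ldir l)))"

lemma bisector_mid_eq_bisector_point:
  assumes "bisects A B A' B' l"
  shows "bisector_mid A B A' B' l = Fin (bisector_point l)"
proof -
  obtain X Y where XY: "(X, Y) \<in> {(A, A'), (B, B')}"
    "dir_cross l X \<noteq> 0" "dir_cross l Y \<noteq> 0" "bisector_mid A B A' B' l = Fin (midpt (meet l X) (meet l Y))"
    using bisector_mid_as_midpt[OF assms] by metis
  have "midpt (meet l X) (meet l Y) = bisector_point l"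
    unfolding bisector_point_def
    by (rule midpt_meet_eq[OF two_neq_0 XY(2,3) bisector_equation[OF assms, THEN conjunct2]])
      (use XY(1) bisector_midpt_numerators[OF bisector_equation[OF assms, THEN conjunct1]] in auto)
  then show ?thesis using XY(4) by simp
qed

lemma Q_antipodal_iff_midpt_eq_centroid:
  assumes "bisects A B A' B' l1" "bisects A B A' B' l2"
  shows "Q_antipodal A B A' B' l1 l2 \<longleftrightarrow> midpt (bisector_point l1) (bisector_point l2) = centroid A B A' B'"
proof -
  have "crosses l A A' \<or> crosses l B B'" if "bisects A B A' B' l" for l
    using bisector_mid_as_midpt[OF that] by blast
  then show ?thesis
    unfolding Q_antipodal_def using assms bisector_mid_eq_bisector_point by auto
qed

theorem Q_antipodal_iff_Q_orthogonal:
  assumes "bisects A B A' B' l1" "bisects A B A' B' l2"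
  shows "Q_antipodal A B A' B' l1 l2 \<longleftrightarrow> Q_orthogonal A B A' B' l1 l2"
proof -
  have "Q_antipodal A B A' B' l1 l2 \<longleftrightarrow>
     bqf (mid_xform A B A' B') (ldir l1) / bqf (dir_form A B A' B') (ldir l1)
     + bqf (mid_xform A B A' B') (ldir l2) / bqf (dir_form A B A' B') (ldir l2)
       = 2 * apolar (mid_xform A B A' B') (dir_form A B A' B') / apolar (dir_form A B A' B') (dir_form A B A' B') \<and>
     bqf (mid_yform A B A' B') (ldir l1) / bqf (dir_form A B A' B') (ldir l1)
     + bqf (mid_yform A B A' B') (ldir l2) / bqf (dir_form A B A' B') (ldir l2)
       = 2 * apolar (mid_yform A B A' B') (dir_form A B A' B') / apolar (dir_form A B A' B') (dir_form A B A' B')"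
    unfolding Q_antipodal_iff_midpt_eq_centroid[OF assms] centroid_eq bisector_point_def midpt_def
      prod.inject fst_conv snd_conv half_sum_halves_eq_half_iff[OF two_neq_0] ..
  also have "\<dots> \<longleftrightarrow> bqf_polar (dir_form A B A' B') (ldir l1) (ldir l2) = 0"
    using assms
    by (intro bqf_ratio_sums_eq_iff_polar_eq_0 two_neq_0 bisector_equation[THEN conjunct2]
        ldir_neq_0 bisector_is_line apolar_dir_form_neq_0 det3_mid_forms_neq_0)
  also have "\<dots> \<longleftrightarrow> Q_orthogonal A B A' B' l1 l2"
    unfolding Q_orthogonal_def bqf_polar_dir_form ldir_def using two_neq_0 by simp
  finally show ?thesis .
qed

end

theorem corollary6p6:
  fixes A B A' B' l1 l2 :: "('a::field) line"
  assumes char: "(2::'a) \<noteq> 0"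
    and quad: "is_quad A B A' B'"
    and no_par_sides: "\<not> parallel A A'" "\<not> parallel B B'"
    and no_par_diags: "\<not> parallel (diag1 A B A' B') (diag2 A B A' B')"
    and bis1: "bisects A B A' B' l1"
    and bis2: "bisects A B A' B' l2"
  shows "Q_antipodal A B A' B' l1 l2 \<longleftrightarrow> Q_orthogonal A B A' B' l1 l2"
proof -
  interpret quad_no_parallels A B A' B'
    using char quad no_par_sides no_par_diags by unfold_locales
  show ?thesis using bis1 bis2 by (rule Q_antipodal_iff_Q_orthogonal)
qed

end
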